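(* Let $\mathcal{C}$ be an ordinary smooth projective curve of genus $g\ge1$ over $\mathbb{F}_q$. Then all of its Frobenius angles $\vartheta_1,\ldots,\vartheta_g$ are irrational.
   Context: Let $\mathcal{C}$ be a smooth projective curve of genus $g\ge1$ over the finite field $\mathbb{F}_q$ ($q$ a power of the prime $p$). The numerator of its zeta function is $P(T)=\prod_{j=1}^{2g}(1-\tau_j T)\in\mathbb{Z}[T]$, where the Frobenius eigenvalues $\tau_j$ satisfy $|\tau_j|=q^{1/2}$ and $\tau_{j+g}=\overline{\tau_j}$ for $j=1,\ldots,g$. Write $\tau_j = q^{1/2}e^{\pi i \vartheta_j}$ and $\tau_{j+g}=q^{1/2}e^{-\pi i\vartheta_j}$ with $\vartheta_j\in[0,1]$; these $\vartheta_j$ ($j=1,\ldots,g$) are the Frobenius angles. Fixing an embedding $\overline{\mathbb{Q}}\hookrightarrow\overline{\mathbb{Q}}_p$, the curve is ordinary if at least half of $\tau_1,\ldots,\tau_{2g}$ are $p$-adic units. *)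

theory Defs
  imports "HOL-Analysis.Analysis" "HOL-Computational_Algebra.Polynomial"
begin

text \<open>A p-adic valuation on the algebraic numbers (viewed inside the complex numbers)
  extending the p-adic valuation of the rationals. Such valuations correspond exactly
  to the choice of an embedding of the algebraic closure of Q into the algebraic
  closure of Q_p; an algebraic number x is a p-adic unit iff v x = 0.\<close>
definition padic_valuation_ext :: "nat \<Rightarrow> (complex \<Rightarrow> real) \<Rightarrow> bool" where
  "padic_valuation_ext p v \<longleftrightarrow>
     (\<forall>x y. algebraic x \<and> algebraic y \<and> x \<noteq> 0 \<and> y \<noteq> 0 \<longrightarrow> v (x * y) = v x + v y) \<and>
     (\<forall>x y. algebraic x \<and> algebraic y \<and> x \<noteq> 0 \<and> y \<noteq> 0 \<and> x + y \<noteq> 0 \<longrightarrow>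
            v (x + y) \<ge> min (v x) (v y)) \<and>
     v (of_nat p) = 1 \<and>
     (\<forall>n::int. n \<noteq> 0 \<and> \<not> int p dvd n \<longrightarrow> v (of_int n) = 0)"

definition padic_unit :: "(complex \<Rightarrow> real) \<Rightarrow> complex \<Rightarrow> bool" where
  "padic_unit v x \<longleftrightarrow> x \<noteq> 0 \<and> v x = 0"

end

theory Submission
  imports Defs
begin

text \<open>
  Write q = p^k, tau_j = sqrt q * exp(i pi theta_j) and tau_{j+g} = sqrt q * exp(-i pi theta_j)
  for j = 1..g, and let v be the p-adic valuation on algebraic numbers.
  (1) tau_j * tau_{j+g} = q and v q = k > 0, so at most one member of each
      conjugate pair (tau_j, tau_{j+g}) is a p-adic unit.
  (2) If theta_j = a/b is rational then tau_j^(2b) = tau_{j+g}^(2b) = q^b, so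
      v tau_j = v tau_{j+g} = k/2 > 0 and neither member of that pair is a unit.
  Counting over the g pairs, a single rational angle leaves fewer than g units
  among tau_1, ..., tau_2g, contradicting ordinarity.
\<close>

text \<open>A number some positive power of which is rational is algebraic; this makes all
  its powers algebraic, which the valuation axioms require.\<close>
lemma algebraic_if_power_rational:
  fixes x :: complex
  assumes "n > 0" and "x ^ n \<in> \<rat>"
  shows "algebraic x"
  by (rule algebraic_root[of "x ^ n" "monom 1 n"])
     (use assms in \<open>auto simp: rat_imp_algebraic poly_monom degree_monom_eq\<close>)

text \<open>The nonzero reciprocal roots of an integer polynomial \<open>P = \<Prod>(1 - tau_j T)\<close>
  are algebraic, since their inverses are roots of \<open>P\<close>.\<close>
lemma algebraic_if_reciprocal_root:
  fixes P :: "int poly" and tau :: "nat \<Rightarrow> complex"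
  assumes P: "map_poly of_int P = (\<Prod>j\<in>J. [:1, - tau j:])"
    and "finite J" and "j \<in> J" and "tau j \<noteq> 0"
  shows "algebraic (tau j)"
proof -
  have "poly (map_poly of_int P) 0 = (1::complex)"
    unfolding P by (simp add: poly_prod)
  then have P_nonzero: "map_poly (of_int :: int \<Rightarrow> complex) P \<noteq> 0"
    by auto
  have "poly (map_poly (of_int :: int \<Rightarrow> complex) P) (inverse (tau j)) = 0"
    unfolding P poly_prod using assms(2-4) by (auto intro!: prod_zero bexI[of _ j])
  then have "algebraic (inverse (tau j))"
    by (intro algebraicI[OF _ P_nonzero]) (auto simp: coeff_map_poly)
  then show ?thesis
    using algebraic_inverse by fastforce
qed

lemma paired_reciprocal_roots_algebraic:
  fixes P :: "int poly" and tau :: "nat \<Rightarrow> complex"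
  assumes P: "map_poly of_int P = (\<Prod>j\<in>{1..2*g}. [:1, - tau j:])"
    and pair: "\<And>j. j \<in> {1..g} \<Longrightarrow> tau j * tau (j + g) = c" and "c \<noteq> 0"
    and j: "j \<in> {1..2*g}"
  shows "algebraic (tau j)"
proof -
  have "tau j \<noteq> 0"
  proof (cases "j \<le> g")
    case True
    then show ?thesis using pair[of j] j \<open>c \<noteq> 0\<close> by auto
  next
    case False
    then have "j - g \<in> {1..g}" and "j = j - g + g"
      using j by auto
    then show ?thesis using pair[of "j - g"] \<open>c \<noteq> 0\<close> by (metis mult_zero_right)
  qed
  then show ?thesis
    by (rule algebraic_if_reciprocal_root[OF P finite_atLeastAtMost j])
qed

lemma padic_valuation_mult:
  assumes "padic_valuation_ext p v" "algebraic x" "algebraic y" "x \<noteq> 0" "y \<noteq> 0"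
  shows "v (x * y) = v x + v y"
  using assms unfolding padic_valuation_ext_def by blast

lemma padic_valuation_one:
  assumes "padic_valuation_ext p v" "prime p"
  shows "v 1 = 0"
proof -
  have "\<not> int p dvd 1"
    using assms(2) by auto
  then show ?thesis
    using assms(1) unfolding padic_valuation_ext_def by (metis of_int_1 one_neq_zero)
qed

text \<open>Additivity for powers; all powers have to be algebraic because the
  axioms only constrain \<open>v\<close> on algebraic numbers.\<close>
lemma padic_valuation_power:
  assumes "padic_valuation_ext p v" "prime p" "x \<noteq> 0" "\<And>m. algebraic (x ^ m)"
  shows "v (x ^ n) = real n * v x"
proof (induction n)
  case 0
  show ?case using padic_valuation_one[OF assms(1,2)] by simp
next
  case (Suc n)
  have "v (x * x ^ n) = v x + v (x ^ n)"
    using padic_valuation_mult[OF assms(1) assms(4)[of 1] assms(4)[of n]] assms(3) by simp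
  then show ?case using Suc by (simp add: algebra_simps)
qed

lemma padic_valuation_prime_power:
  assumes "padic_valuation_ext p v" "prime p"
  shows "v (of_nat p ^ n) = real n"
proof -
  have "algebraic ((of_nat p :: complex) ^ m)" for m
    by (rule rat_imp_algebraic) simp
  moreover have "(of_nat p :: complex) \<noteq> 0"
    using assms(2) by (simp add: prime_gt_0_nat)
  ultimately show ?thesis
    using padic_valuation_power[OF assms] assms(1)
    unfolding padic_valuation_ext_def by simp
qed

lemma padic_valuation_root_of_prime_power:
  assumes "padic_valuation_ext p v" "prime p" "N > 0" "x ^ N = of_nat p ^ m"
  shows "v x = real m / real N"
proof -
  have "x \<noteq> 0"
    using assms(2-4) by (auto simp: power_0_left prime_gt_0_nat)
  have "(x ^ n) ^ N \<in> \<rat>" for n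
  proof -
    have "(x ^ n) ^ N = (x ^ N) ^ n"
      by (simp only: power_mult[symmetric] mult.commute)
    then show ?thesis
      using assms(4) by simp
  qed
  then have "algebraic (x ^ n)" for n
    using algebraic_if_power_rational[OF assms(3)] by blast
  then have "real N * v x = real m"
    using padic_valuation_power[OF assms(1,2) \<open>x \<noteq> 0\<close>, of N]
      padic_valuation_prime_power[OF assms(1,2), of m] assms(4) by simp
  then show ?thesis
    using assms(3) by (simp add: field_simps)
qed

lemma not_both_padic_units:
  assumes "padic_valuation_ext p v" "prime p" "m \<ge> 1"
    and "algebraic x" "algebraic y" "x * y = of_nat p ^ m"
  shows "\<not> (padic_unit v x \<and> padic_unit v y)"
proof
  assume units: "padic_unit v x \<and> padic_unit v y"
  then have "v (x * y) = 0"
    using padic_valuation_mult[OF assms(1,4,5)] unfolding padic_unit_def by simp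
  then show False
    using padic_valuation_prime_power[OF assms(1,2), of m] assms(3,6) by simp
qed

lemma weil_pair_product:
  assumes "q \<ge> 0"
  shows "(of_real (sqrt q) * exp (\<i> * of_real \<phi>)) * (of_real (sqrt q) * exp (- \<i> * of_real \<phi>))
         = (of_real q :: complex)"
proof -
  have "exp (\<i> * of_real \<phi>) * exp (- \<i> * of_real \<phi>) = 1"
    by (simp flip: exp_add)
  moreover have "of_real (sqrt q) * of_real (sqrt q) = (of_real q :: complex)"
    using assms by (simp flip: of_real_mult)
  ultimately show ?thesis
    by (simp add: algebra_simps)
qed

lemma exp_rational_angle_root_of_unity:
  assumes "b > 0"
  shows "exp (\<i> * of_real (pi * (of_int a / of_int b))) ^ nat (2 * b) = 1"
proof -
  have "exp (\<i> * of_real (pi * (of_int a / of_int b))) ^ nat (2 * b)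
        = exp (of_nat (nat (2 * b)) * (\<i> * of_real (pi * (of_int a / of_int b))))"
    by (rule exp_of_nat_mult[symmetric])
  also have "of_nat (nat (2 * b)) * (\<i> * of_real (pi * (of_int a / of_int b)))
             = 2 * of_int a * of_real pi * \<i>"
    using assms by (simp add: field_simps)
  also have "exp \<dots> = 1"
    using exp_integer_2pi[of "of_int a"] by simp
  finally show ?thesis .
qed

text \<open>Hence \<open>(sqrt(p^k) * exp(i pi a/b))^(2b) = p^(kb)\<close>; the conjugate number is covered
  by replacing \<open>a\<close> with \<open>-a\<close>.\<close>
lemma weil_number_rational_angle_power:
  assumes "b > 0"
  shows "(of_real (sqrt (real (p ^ k))) * exp (\<i> * of_real (pi * (of_int a / of_int b))))
           ^ nat (2 * b) = (of_nat p ^ (k * nat b) :: complex)"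
proof -
  have "(of_real (sqrt (real (p ^ k))) :: complex) ^ 2 = of_real (real (p ^ k))"
    by (simp flip: of_real_power)
  also have "\<dots> = of_nat p ^ k"
    by simp
  finally have "(of_real (sqrt (real (p ^ k))) :: complex) ^ nat (2 * b) = (of_nat p ^ k) ^ nat b"
    using assms by (simp add: nat_mult_distrib power_mult)
  then show ?thesis
    using exp_rational_angle_root_of_unity[OF assms, of a]
    by (simp add: power_mult_distrib flip: power_mult)
qed

text \<open>Consequently such a number with rational angle has valuation \<open>k/2\<close>, so it is
  not a p-adic unit.\<close>
lemma weil_number_rational_angle_not_unit:
  assumes "padic_valuation_ext p v" "prime p" "k \<ge> 1" "b > 0"
  shows "\<not> padic_unit v (of_real (sqrt (real (p ^ k))) * exp (\<i> * of_real (pi * (of_int a / of_int b))))"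
    (is "\<not> padic_unit v ?x")
proof -
  have "v ?x = real (k * nat b) / real (nat (2 * b))"
    by (rule padic_valuation_root_of_prime_power[OF assms(1,2) _
          weil_number_rational_angle_power[OF assms(4)]])
       (use assms(4) in simp)
  also have "\<dots> = real k / 2"
    using assms(4) by (simp add: nat_mult_distrib)
  finally show ?thesis
    using assms(3) unfolding padic_unit_def by simp
qed

lemma card_pairs_less:
  fixes Q :: "nat \<Rightarrow> bool"
  assumes "j0 \<in> {1..g}" "\<not> Q j0" "\<not> Q (j0 + g)"
    and at_most_one: "\<And>j. j \<in> {1..g} \<Longrightarrow> \<not> (Q j \<and> Q (j + g))"
  shows "card {j \<in> {1..2*g}. Q j} < g"
proof -
  define A where "A = {j \<in> {1..g}. Q j}"
  define B where "B = {j \<in> {1..g}. Q (j + g)}"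
  have split: "{j \<in> {1..2*g}. Q j} = A \<union> (\<lambda>j. j + g) ` B"
  proof (intro equalityI subsetI)
    fix j assume j: "j \<in> {j \<in> {1..2*g}. Q j}"
    show "j \<in> A \<union> (\<lambda>j. j + g) ` B"
    proof (cases "j \<le> g")
      case False
      then have "j - g \<in> B" and "j = j - g + g"
        using j unfolding B_def by auto
      then show ?thesis by blast
    qed (use j A_def in auto)
  qed (auto simp: A_def B_def)
  have "A \<inter> (\<lambda>j. j + g) ` B = {}"
    by (auto simp: A_def B_def)
  then have "card {j \<in> {1..2*g}. Q j} = card A + card B"
    unfolding split by (simp add: card_Un_disjoint card_image A_def B_def)
  also have "\<dots> = card (A \<union> B)"
    using at_most_one by (subst card_Un_disjoint) (auto simp: A_def B_def)
  also have "\<dots> \<le> card ({1..g} - {j0})"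
    using assms(2,3) by (intro card_mono) (auto simp: A_def B_def)
  also have "\<dots> < g"
    using assms(1) by simp
  finally show ?thesis .
qed

theorem lemma8:
  fixes p k g :: nat and P :: "int poly" and tau :: "nat \<Rightarrow> complex"
    and theta :: "nat \<Rightarrow> real" and v :: "complex \<Rightarrow> real"
  assumes "prime p" and "k \<ge> 1" and "g \<ge> 1"
    and "map_poly of_int P = (\<Prod>j\<in>{1..2*g}. [:1, - tau j:])"
    and "\<And>j. j \<in> {1..g} \<Longrightarrow> theta j \<in> {0..1}"
    and "\<And>j. j \<in> {1..g} \<Longrightarrow>
           tau j = complex_of_real (sqrt (real (p ^ k))) * exp (\<i> * complex_of_real (pi * theta j))"
    and "\<And>j. j \<in> {1..g} \<Longrightarrow>
           tau (j + g) = complex_of_real (sqrt (real (p ^ k))) * exp (- \<i> * complex_of_real (pi * theta j))"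
    and "padic_valuation_ext p v"
    and "card {j \<in> {1..2*g}. padic_unit v (tau j)} \<ge> g"
  shows "\<forall>j\<in>{1..g}. theta j \<notin> \<rat>"
proof (rule ccontr)
  assume "\<not> (\<forall>j\<in>{1..g}. theta j \<notin> \<rat>)"
  then obtain j0 a b where j0: "j0 \<in> {1..g}" and b: "b > 0"
    and theta_j0: "theta j0 = of_int a / of_int b"
    by (metis Rats_cases')
  have pair: "tau j * tau (j + g) = of_nat p ^ k" if "j \<in> {1..g}" for j
  proof -
    have "tau j * tau (j + g) = of_real (real (p ^ k))"
      unfolding assms(6,7)[OF that] by (rule weil_pair_product) simp
    then show ?thesis by simp
  qed
  have q_nonzero: "of_nat p ^ k \<noteq> (0 :: complex)"
    using assms(1) by (simp add: prime_gt_0_nat)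
  have algebraic: "algebraic (tau j)" if "j \<in> {1..2*g}" for j
    by (rule paired_reciprocal_roots_algebraic[where tau = tau and g = g,
          OF assms(4) pair q_nonzero that])
  have tau_j0: "tau j0 = of_real (sqrt (real (p ^ k))) * exp (\<i> * of_real (pi * (of_int a / of_int b)))"
    using assms(6)[OF j0] theta_j0 by simp
  have tau_j0_conj: "tau (j0 + g)
      = of_real (sqrt (real (p ^ k))) * exp (\<i> * of_real (pi * (of_int (- a) / of_int b)))"
    using assms(7)[OF j0] theta_j0 by simp
  have not_unit: "\<not> padic_unit v (tau j0)"
    using weil_number_rational_angle_not_unit[OF assms(8,1,2) b] unfolding tau_j0 .
  have not_unit_conj: "\<not> padic_unit v (tau (j0 + g))"
    using weil_number_rational_angle_not_unit[OF assms(8,1,2) b] unfolding tau_j0_conj .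
  have at_most_one: "\<not> (padic_unit v (tau j) \<and> padic_unit v (tau (j + g)))" if "j \<in> {1..g}" for j
    using not_both_padic_units[OF assms(8,1,2) algebraic algebraic pair[OF that]] that by auto
  show False
    using card_pairs_less[where Q = "\<lambda>j. padic_unit v (tau j)",
          OF j0 not_unit not_unit_conj at_most_one] assms(9)
    by linarith
qed

end
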